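(* Let $n\ge 2$, let $M_n=\{1,2,\dots,n\}$, and let $\mathcal{F}\subset 2^{M_n}$ be a union-closed family (i.e. $A\cup B\in\mathcal{F}$ whenever $A,B\in\mathcal{F}$) with $\bigcup_{A\in\mathcal{F}}A=M_n$. Fix $i\in M_n$ and put $\mathcal{G}=\{A\setminus\{i\}: A\in\mathcal{F}\}$. Fix $j\in M_n\setminus\{i\}$ and let $\mathcal{G}_j=\{A\in\mathcal{G}: j\in A\}$ and $\mathcal{F}_j=\{A\in\mathcal{F}: j\in A\}$. If $\frac{|\mathcal{G}_j|}{|\mathcal{G}|}\ge c$ for some constant $c\in(0,1]$, then $$\frac{|\mathcal{F}_j|}{|\mathcal{F}|}\ge \frac{1}{1+2(1-c)/c}.$$
   Context: $|X|$ denotes the cardinality of a set $X$; $2^{M_n}$ is the power set of $M_n$. Note $\mathcal{G}$ is a set of sets, so $|\mathcal{G}|$ counts distinct sets $A\setminus\{i\}$. *)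

theory Defs
  imports "HOL-Analysis.Analysis"
begin

end

theory Submission
  imports Defs
begin

(* Deleting i from the members of F identifies at most two of them, B and B \<union> {i}, and for
   j \<noteq> i it neither creates nor destroys membership of j.  Hence F has at least as many members
   containing j as G, and at most twice as many members avoiding j as G; the ratio bound is then
   elementary arithmetic. *)

lemma card_filter_add_card_filter_not:
  assumes "finite S"
  shows "card {x \<in> S. P x} + card {x \<in> S. \<not> P x} = card S"
proof -
  have "card ({x \<in> S. P x} \<union> {x \<in> S. \<not> P x}) = card {x \<in> S. P x} + card {x \<in> S. \<not> P x}"
    using assms by (intro card_Un_disjoint) auto
  moreover have "{x \<in> S. P x} \<union> {x \<in> S. \<not> P x} = S" by blast
  ultimately show ?thesis by simp
qed

lemma card_le_mult_card_image:
  assumes "finite S" and "\<And>y. y \<in> f ` S \<Longrightarrow> card {x \<in> S. f x = y} \<le> k"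
  shows "card S \<le> k * card (f ` S)"
proof -
  have "card S = (\<Sum>y\<in>f ` S. card {x \<in> S. f x = y})"
    using sum.image_gen[OF assms(1), of "\<lambda>_. 1::nat" f] by simp
  also have "\<dots> \<le> (\<Sum>y\<in>f ` S. k)"
    by (rule sum_mono) (rule assms(2))
  finally show ?thesis by (simp add: mult.commute)
qed

lemma card_le_double_card_image_Diff_singleton:
  fixes S :: "'a set set"
  assumes "finite S"
  shows "card S \<le> 2 * card ((\<lambda>A. A - {a}) ` S)"
proof (rule card_le_mult_card_image[OF assms])
  fix B
  have "{A \<in> S. A - {a} = B} \<subseteq> {B, insert a B}" by auto
  then have "card {A \<in> S. A - {a} = B} \<le> card {B, insert a B}"
    by (rule card_mono[rotated]) simp
  also have "\<dots> \<le> 2" by (rule card_insert_le_m1) simp_all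
  finally show "card {A \<in> S. A - {a} = B} \<le> 2" .
qed

lemma ratio_lower_bound:
  fixes p q p' q' c k :: real
  assumes "0 < p + q" and "q \<le> k * q'" and "p' \<le> p" and "c * (p' + q') \<le> p'"
    and "0 < c" and "c \<le> 1" and "0 \<le> k"
  shows "1 / (1 + k * (1 - c) / c) \<le> p / (p + q)"
proof -
  have "c * q \<le> k * (c * q')" using assms(2,5) by (simp add: mult_left_mono)
  also have "\<dots> \<le> k * ((1 - c) * p')" using assms(4,7)
    by (intro mult_left_mono) (simp_all add: algebra_simps)
  also have "\<dots> \<le> k * ((1 - c) * p)" using assms(3,6,7) by (intro mult_left_mono) auto
  finally have "c * (p + q) \<le> (c + k * (1 - c)) * p" by (simp add: algebra_simps)
  moreover have "0 < c + k * (1 - c)" using assms(5-7) by (simp add: add_pos_nonneg)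
  ultimately have "c / (c + k * (1 - c)) \<le> p / (p + q)"
    using assms(1) by (simp add: frac_le_eq divide_le_eq_1 field_simps)
  moreover have "1 / (1 + k * (1 - c) / c) = c / (c + k * (1 - c))"
    using assms(5) by (simp add: field_simps)
  ultimately show ?thesis by simp
qed

theorem lemma1p1:
  fixes n :: nat and F :: "nat set set" and i j :: nat and c :: real
  assumes "n \<ge> 2"
    and "F \<subseteq> Pow {1..n}"
    and "\<And>A B. A \<in> F \<Longrightarrow> B \<in> F \<Longrightarrow> A \<union> B \<in> F"
    and "\<Union> F = {1..n}"
    and "i \<in> {1..n}"
    and "j \<in> {1..n} - {i}"
    and "0 < c" and "c \<le> 1"
    and "real (card {A \<in> (\<lambda>A. A - {i}) ` F. j \<in> A}) / real (card ((\<lambda>A. A - {i}) ` F)) \<ge> c"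
  shows "real (card {A \<in> F. j \<in> A}) / real (card F) \<ge> 1 / (1 + 2 * (1 - c) / c)"
proof -
  let ?G = "(\<lambda>A. A - {i}) ` F"
  define fj fn gj gn
    where "fj = card {A \<in> F. j \<in> A}" and "fn = card {A \<in> F. j \<notin> A}"
      and "gj = card {B \<in> ?G. j \<in> B}" and "gn = card {B \<in> ?G. j \<notin> B}"
  have "finite F" using assms(2) by (rule finite_subset) simp
  have "F \<noteq> {}" using assms(1,4) by auto
  have "j \<noteq> i" using assms(6) by simp
  then have with_j: "{B \<in> ?G. j \<in> B} = (\<lambda>A. A - {i}) ` {A \<in> F. j \<in> A}"
    and without_j: "{B \<in> ?G. j \<notin> B} = (\<lambda>A. A - {i}) ` {A \<in> F. j \<notin> A}"
    by auto
  have "gj \<le> fj"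
    unfolding gj_def fj_def with_j using \<open>finite F\<close> by (intro card_image_le) simp
  moreover have "fn \<le> 2 * gn"
    unfolding gn_def fn_def without_j using \<open>finite F\<close>
    by (intro card_le_double_card_image_Diff_singleton) simp
  moreover have F_split: "card F = fj + fn" and "card ?G = gj + gn"
    unfolding fj_def fn_def gj_def gn_def using \<open>finite F\<close>
    by (simp_all add: card_filter_add_card_filter_not)
  moreover have "0 < card F" and "0 < card ?G"
    using \<open>finite F\<close> \<open>F \<noteq> {}\<close> by (simp_all add: card_gt_0_iff)
  moreover have "c * card ?G \<le> gj"
    using assms(9) \<open>0 < card ?G\<close> unfolding gj_def by (simp add: le_divide_eq)
  ultimately have "1 / (1 + 2 * (1 - c) / c) \<le> real fj / (real fj + real fn)"
    using assms(7,8) by (intro ratio_lower_bound[where p' = gj and q' = gn]) auto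
  then show ?thesis unfolding fj_def[symmetric] F_split by simp
qed

end
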